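(* Let $(\mathcal{M},\mathcal{L})$ be a regular symplectic pair with $\mathcal{M},\mathcal{L}\in\mathbb{C}^{2n\times2n}$ and $\mathrm{ind}_\infty(\mathcal{M},\mathcal{L})\le1$. Let $\hat n\le n$, $\ell=n-\hat n$, $U_0,U_\infty\in\mathbb{C}^{2n\times\ell}$, $U_1\in\mathbb{C}^{2n\times2\hat n}$, $\mathbf{U}=[U_1\,|\,U_0,U_\infty]$ and a symplectic $\widehat{\mathcal{S}}\in\mathbb{C}^{2\hat n\times2\hat n}$ satisfy $\mathbf{U}^H\mathcal{J}_n\mathbf{U}=\mathcal{J}_{\hat n}\oplus\mathcal{J}_\ell$, $\mathcal{M}U_0=0$, $\mathcal{L}U_\infty=0$, $\mathcal{M}U_1=\mathcal{L}U_1\widehat{\mathcal{S}}$. Let $\widehat{\mathcal{H}}\in\mathbb{C}^{2\hat n\times2\hat n}$ be a Hamiltonian matrix with $e^{\widehat{\mathcal{H}}}=\widehat{\mathcal{S}}$. Then the matrix $$\mathcal{H}=\mathbf{U}\begin{bmatrix}\widehat{\mathcal{H}}&0\\0&0_{2\ell}\end{bmatrix}(\mathcal{J}_{\hat n}\oplus\mathcal{J}_\ell)^H\mathbf{U}^H\mathcal{J}_n$$ is Hamiltonian.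
   Context: $\mathcal{J}_m=\begin{bmatrix}0&I_m\\-I_m&0\end{bmatrix}$. A matrix $\mathcal{H}\in\mathbb{C}^{2m\times2m}$ is Hamiltonian if $\mathcal{H}\mathcal{J}_m=(\mathcal{H}\mathcal{J}_m)^H$; $\mathcal{S}$ is symplectic if $\mathcal{S}\mathcal{J}_m\mathcal{S}^H=\mathcal{J}_m$. A pair $(\mathcal{M},\mathcal{L})$ is symplectic if $\mathcal{M}\mathcal{J}_n\mathcal{M}^H=\mathcal{L}\mathcal{J}_n\mathcal{L}^H$, regular if $\det(\mathcal{M}-\lambda\mathcal{L})\ne0$ for some $\lambda$. $\mathrm{ind}_\infty(A,B)$ is the nilpotency index of the nilpotent block $N$ in the Kronecker canonical form $PAQ=\mathrm{diag}(J,I)$, $PBQ=\mathrm{diag}(I,N)$ of a regular pair, and is $0$ if $B$ is invertible. *)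

theory Defs
  imports "Jordan_Normal_Form.Schur_Decomposition"
begin

definition Jmat :: "nat \<Rightarrow> complex mat" where
  "Jmat m = four_block_mat (0\<^sub>m m m) (1\<^sub>m m) (- 1\<^sub>m m) (0\<^sub>m m m)"

definition dsum :: "complex mat \<Rightarrow> complex mat \<Rightarrow> complex mat" where
  "dsum A B = four_block_mat A (0\<^sub>m (dim_row A) (dim_col B)) (0\<^sub>m (dim_row B) (dim_col A)) B"

definition hamiltonian :: "complex mat \<Rightarrow> bool" where
  "hamiltonian H \<longleftrightarrow> (\<exists>m. H \<in> carrier_mat (2*m) (2*m) \<and>
      H * Jmat m = mat_adjoint (H * Jmat m))"

definition symplectic :: "complex mat \<Rightarrow> bool" where
  "symplectic S \<longleftrightarrow> (\<exists>m. S \<in> carrier_mat (2*m) (2*m) \<and>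
      S * Jmat m * mat_adjoint S = Jmat m)"

definition symplectic_pair :: "nat \<Rightarrow> complex mat \<Rightarrow> complex mat \<Rightarrow> bool" where
  "symplectic_pair n M L \<longleftrightarrow> M \<in> carrier_mat (2*n) (2*n) \<and> L \<in> carrier_mat (2*n) (2*n) \<and>
      M * Jmat n * mat_adjoint M = L * Jmat n * mat_adjoint L"

definition regular_pair :: "complex mat \<Rightarrow> complex mat \<Rightarrow> bool" where
  "regular_pair A B \<longleftrightarrow> (\<exists>z. det (A - z \<cdot>\<^sub>m B) \<noteq> 0)"

text \<open>Index at infinity: nilpotency index of the nilpotent block N in a
  Weierstrass/Kronecker form P A Q = diag(J, I), P B Q = diag(I, N); 0 if B invertible.\<close>
definition ind_inf :: "complex mat \<Rightarrow> complex mat \<Rightarrow> nat" where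
  "ind_inf A B = (if invertible_mat B then 0 else
     (LEAST k. \<exists>P Q r s J N. P \<in> carrier_mat (dim_row A) (dim_row A) \<and>
        Q \<in> carrier_mat (dim_row A) (dim_row A) \<and> invertible_mat P \<and> invertible_mat Q \<and>
        r + s = dim_row A \<and> J \<in> carrier_mat r r \<and> N \<in> carrier_mat s s \<and>
        P * A * Q = four_block_mat J (0\<^sub>m r s) (0\<^sub>m s r) (1\<^sub>m s) \<and>
        P * B * Q = four_block_mat (1\<^sub>m r) (0\<^sub>m r s) (0\<^sub>m s r) N \<and>
        N ^\<^sub>m k = 0\<^sub>m s s))"

definition mat_exp :: "complex mat \<Rightarrow> complex mat" where
  "mat_exp H = mat (dim_row H) (dim_col H) (\<lambda>(i,j). \<Sum>k. (H ^\<^sub>m k) $$ (i,j) / of_nat (fact k))"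

end

theory Submission
  imports Defs
begin

text \<open>Writing \<open>D = J\<^sub>n\<^sub>h \<oplus> J\<^sub>l\<close>, the matrix in question is \<open>\<H> = X J\<^sub>n\<close> with
  \<open>X = U (\<H>\<^sub>h \<oplus> 0) D\<^sup>H U\<^sup>H\<close>. Since \<open>J\<^sup>H = -J\<close>, the middle factor is
  \<open>(-\<H>\<^sub>h J\<^sub>n\<^sub>h) \<oplus> 0\<close>, which is Hermitian because \<open>\<H>\<^sub>h\<close> is Hamiltonian; hence
  \<open>X\<close> is Hermitian by congruence, and \<open>\<H> J\<^sub>n = -X\<close> is Hermitian as well.
  Only the Hamiltonian property of \<open>\<H>\<^sub>h\<close> and the dimensions enter.\<close>

definition hermitian :: "complex mat \<Rightarrow> bool" where
  "hermitian A \<longleftrightarrow> mat_adjoint A = A"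

lemma mat_adjoint_altdef:
  "mat_adjoint (A::complex mat) = mat (dim_col A) (dim_row A) (\<lambda>(i,j). cnj (A $$ (j,i)))"
  unfolding mat_adjoint_def by (rule eq_matI) (auto simp: mat_of_rows_def)

lemma dim_mat_adjoint[simp]:
  "dim_row (mat_adjoint (A::complex mat)) = dim_col A"
  "dim_col (mat_adjoint (A::complex mat)) = dim_row A"
  unfolding mat_adjoint_altdef by simp_all

lemma index_mat_adjoint[simp]:
  "i < dim_col A \<Longrightarrow> j < dim_row A \<Longrightarrow> mat_adjoint (A::complex mat) $$ (i,j) = cnj (A $$ (j,i))"
  unfolding mat_adjoint_altdef by simp

lemma mat_adjoint_carrier[simp]:
  "(A::complex mat) \<in> carrier_mat n m \<Longrightarrow> mat_adjoint A \<in> carrier_mat m n"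
  unfolding carrier_mat_def by simp

lemma mat_adjoint_adjoint[simp]: "mat_adjoint (mat_adjoint (A::complex mat)) = A"
  by (rule eq_matI) simp_all

lemma mat_adjoint_uminus: "mat_adjoint (- (A::complex mat)) = - mat_adjoint A"
  by (rule eq_matI) simp_all

lemma mat_adjoint_zero[simp]: "mat_adjoint (0\<^sub>m n m :: complex mat) = 0\<^sub>m m n"
  by (rule eq_matI) simp_all

lemma mat_adjoint_mult:
  assumes "dim_col A = dim_row (B::complex mat)"
  shows "mat_adjoint (A * B) = mat_adjoint B * mat_adjoint A"
  by (rule eq_matI) (use assms in \<open>simp_all add: scalar_prod_def cnj_sum mult.commute\<close>)

lemma mat_adjoint_four_block_mat:
  assumes "A \<in> carrier_mat n1 m1" "B \<in> carrier_mat n1 m2"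
    and "C \<in> carrier_mat n2 m1" "D \<in> carrier_mat n2 m2"
  shows "mat_adjoint (four_block_mat A B C (D::complex mat)) =
    four_block_mat (mat_adjoint A) (mat_adjoint C) (mat_adjoint B) (mat_adjoint D)"
proof (rule eq_matI)
  fix i j
  assume "i < dim_row (four_block_mat (mat_adjoint A) (mat_adjoint C) (mat_adjoint B) (mat_adjoint D))"
    and "j < dim_col (four_block_mat (mat_adjoint A) (mat_adjoint C) (mat_adjoint B) (mat_adjoint D))"
  then have "i < m1 + m2" "j < n1 + n2" using assms by auto
  then show "mat_adjoint (four_block_mat A B C D) $$ (i, j) =
      four_block_mat (mat_adjoint A) (mat_adjoint C) (mat_adjoint B) (mat_adjoint D) $$ (i, j)"
    using assms by (cases "i < m1"; cases "j < n1") auto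
qed (use assms in auto)

lemma uminus_zero_mat[simp]: "- 0\<^sub>m n m = (0\<^sub>m n m :: 'a :: group_add mat)"
  by (rule eq_matI) simp_all

lemma hermitian_uminus: "hermitian A \<Longrightarrow> hermitian (- A)"
  unfolding hermitian_def by (simp add: mat_adjoint_uminus)

lemma hermitian_zero: "hermitian (0\<^sub>m n n)"
  unfolding hermitian_def by simp

lemma hermitian_congruence:
  assumes "U \<in> carrier_mat n k" "P \<in> carrier_mat k k" "hermitian P"
  shows "hermitian (U * P * mat_adjoint U)"
proof -
  have "mat_adjoint (U * P * mat_adjoint U) = U * (P * mat_adjoint U)"
    using assms by (simp add: mat_adjoint_mult hermitian_def)
  also have "\<dots> = U * P * mat_adjoint U"
    using assoc_mult_mat[OF assms(1,2) mat_adjoint_carrier[OF assms(1)]] by simp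
  finally show ?thesis unfolding hermitian_def .
qed

lemma dsum_carrier:
  "A \<in> carrier_mat n1 m1 \<Longrightarrow> B \<in> carrier_mat n2 m2 \<Longrightarrow> dsum A B \<in> carrier_mat (n1 + n2) (m1 + m2)"
  unfolding dsum_def by auto

lemma mat_adjoint_dsum: "mat_adjoint (dsum A B) = dsum (mat_adjoint A) (mat_adjoint B)"
  unfolding dsum_def by (subst mat_adjoint_four_block_mat) auto

lemma hermitian_dsum: "hermitian A \<Longrightarrow> hermitian B \<Longrightarrow> hermitian (dsum A B)"
  unfolding hermitian_def by (simp add: mat_adjoint_dsum)

lemma dsum_mult:
  assumes "A \<in> carrier_mat n1 k1" "B \<in> carrier_mat n2 k2"
    and "C \<in> carrier_mat k1 m1" "D \<in> carrier_mat k2 m2"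
  shows "dsum A B * dsum C D = dsum (A * C) (B * D)"
  unfolding dsum_def using assms
  by (subst mult_four_block_mat[of _ n1 k1 _ k2 _ n2 _ _ m1 _ m2]) auto

lemma Jmat_carrier[simp]: "Jmat m \<in> carrier_mat (2*m) (2*m)"
  unfolding Jmat_def carrier_mat_def by simp

lemma dim_Jmat[simp]: "dim_row (Jmat m) = 2*m" "dim_col (Jmat m) = 2*m"
  unfolding Jmat_def by simp_all

lemma mat_adjoint_Jmat: "mat_adjoint (Jmat m) = - Jmat m"
  unfolding Jmat_def by (rule eq_matI) simp_all

lemma Jmat_square: "Jmat m * Jmat m = - 1\<^sub>m (2*m)"
proof -
  have "Jmat m * Jmat m = four_block_mat (- 1\<^sub>m m) (0\<^sub>m m m) (0\<^sub>m m m) (- 1\<^sub>m m)"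
    unfolding Jmat_def by (subst mult_four_block_mat[of _ m m _ m _ m _ _ m _ m]) auto
  also have "\<dots> = - 1\<^sub>m (2*m)"
    by (rule eq_matI) auto
  finally show ?thesis .
qed

lemma hamiltonianD:
  "hamiltonian H \<Longrightarrow> H \<in> carrier_mat (2*m) (2*m) \<Longrightarrow> hermitian (H * Jmat m)"
  unfolding hamiltonian_def hermitian_def by auto

lemma hamiltonian_mult_Jmat:
  assumes "X \<in> carrier_mat (2*m) (2*m)" "hermitian X"
  shows "hamiltonian (X * Jmat m)"
proof -
  have "X * Jmat m * Jmat m = X * - 1\<^sub>m (2*m)"
    using assoc_mult_mat[OF assms(1) Jmat_carrier Jmat_carrier] by (simp add: Jmat_square)
  also have "\<dots> = - X"
    using assms(1) by simp
  finally have "X * Jmat m * Jmat m = - X" .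
  then have "hermitian (X * Jmat m * Jmat m)"
    using assms(2) by (simp add: hermitian_uminus)
  then show ?thesis
    using assms(1) unfolding hamiltonian_def hermitian_def by (intro exI[of _ m]) auto
qed

lemma hermitian_dsum_hamiltonian_zero:
  assumes "H \<in> carrier_mat (2*p) (2*p)" "hamiltonian H"
  shows "hermitian (dsum H (0\<^sub>m (2*q) (2*q)) * mat_adjoint (dsum (Jmat p) (Jmat q)))"
proof -
  have "dsum H (0\<^sub>m (2*q) (2*q)) * mat_adjoint (dsum (Jmat p) (Jmat q))
      = dsum (- (H * Jmat p)) (0\<^sub>m (2*q) (2*q))"
    using assms(1)
    by (simp add: mat_adjoint_dsum mat_adjoint_Jmat dsum_mult[of _ "2*p" "2*p" _ "2*q" "2*q" _ "2*p" _ "2*q"])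
  then show ?thesis
    using assms by (simp add: hermitian_dsum hermitian_uminus hermitian_zero hamiltonianD)
qed

theorem theorem2p4:
  fixes n nh l :: nat and M L U0 Uinf U1 Sh Hh :: "complex mat"
  assumes M: "M \<in> carrier_mat (2*n) (2*n)" and L: "L \<in> carrier_mat (2*n) (2*n)"
    and reg: "regular_pair M L"
    and sp: "symplectic_pair n M L"
    and ind: "ind_inf M L \<le> 1"
    and nh: "nh \<le> n" and l: "l = n - nh"
    and U0: "U0 \<in> carrier_mat (2*n) l" and Uinf: "Uinf \<in> carrier_mat (2*n) l"
    and U1: "U1 \<in> carrier_mat (2*n) (2*nh)"
    and Sh: "Sh \<in> carrier_mat (2*nh) (2*nh)" and Ssymp: "symplectic Sh"
    and UJU: "mat_adjoint (mat_of_cols (2*n) (cols U1 @ cols U0 @ cols Uinf)) * Jmat n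
                * mat_of_cols (2*n) (cols U1 @ cols U0 @ cols Uinf) = dsum (Jmat nh) (Jmat l)"
    and MU0: "M * U0 = 0\<^sub>m (2*n) l"
    and LUinf: "L * Uinf = 0\<^sub>m (2*n) l"
    and MU1: "M * U1 = L * U1 * Sh"
    and Hh: "Hh \<in> carrier_mat (2*nh) (2*nh)" and Hham: "hamiltonian Hh"
    and expH: "mat_exp Hh = Sh"
  shows "hamiltonian (mat_of_cols (2*n) (cols U1 @ cols U0 @ cols Uinf)
           * dsum Hh (0\<^sub>m (2*l) (2*l)) * mat_adjoint (dsum (Jmat nh) (Jmat l))
           * mat_adjoint (mat_of_cols (2*n) (cols U1 @ cols U0 @ cols Uinf)) * Jmat n)"
proof -
  define U where "U = mat_of_cols (2*n) (cols U1 @ cols U0 @ cols Uinf)"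
  define K where "K = dsum Hh (0\<^sub>m (2*l) (2*l))"
  define D where "D = dsum (Jmat nh) (Jmat l)"
  have U_carrier: "U \<in> carrier_mat (2*n) (2*n)"
    unfolding U_def using U1 U0 Uinf nh l by auto
  have n: "2*n = 2*nh + 2*l"
    using nh l by simp
  have K_carrier: "K \<in> carrier_mat (2*n) (2*n)"
    and adjoint_D_carrier: "mat_adjoint D \<in> carrier_mat (2*n) (2*n)"
    unfolding K_def D_def n using Hh by (auto intro!: mat_adjoint_carrier dsum_carrier)
  then have "U * K * mat_adjoint D = U * (K * mat_adjoint D)"
    using U_carrier by (simp add: assoc_mult_mat)
  moreover have "hermitian (U * (K * mat_adjoint D) * mat_adjoint U)"
    using U_carrier K_carrier adjoint_D_carrier Hh Hham unfolding K_def D_def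
    by (intro hermitian_congruence hermitian_dsum_hamiltonian_zero) auto
  moreover have "U * (K * mat_adjoint D) * mat_adjoint U \<in> carrier_mat (2*n) (2*n)"
    using U_carrier K_carrier adjoint_D_carrier by auto
  ultimately show ?thesis
    unfolding U_def[symmetric] K_def[symmetric] D_def[symmetric]
    by (simp add: hamiltonian_mult_Jmat)
qed

end
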